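(* Let $G=D_\infty=\langle s\rangle\rtimes\langle t\rangle$ and let $\alpha,\beta:\mathbb{Z}\curvearrowright X_0$ be two minimal topologically free continuous actions on a compact Hausdorff space $X_0$. Let $\widetilde\alpha,\widetilde\beta:G\curvearrowright X:=G/\mathbb{Z}\times X_0$ be the associated induced actions (with $\mathbb{Z}=\langle s\rangle$ and lift $L(\mathbb{Z})=e$, $L(t\mathbb{Z})=t$). Then: (1) if $\widetilde\alpha$ and $\widetilde\beta$ are continuously orbit equivalent via the identity homeomorphism of $X$ (i.e. there are continuous $c,c':G\times X\to G$ with $\widetilde\alpha_g(\tilde x)=\widetilde\beta_{c(g,\tilde x)}(\tilde x)$ and $\widetilde\beta_g(\tilde x)=\widetilde\alpha_{c'(g,\tilde x)}(\tilde x)$), then $\alpha$ and $\beta$ are continuously orbit equivalent; (2) if $\alpha$ and $\beta$ are continuously orbit equivalent, then $\widetilde\alpha$ and $\widetilde\beta$ are conjugate.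
   Context: Induced action: with $\delta:G\times G/\mathbb{Z}\to\mathbb{Z}$, $\delta(g,g'\mathbb{Z})=L(gg'\mathbb{Z})^{-1}gL(g'\mathbb{Z})$, set $\widetilde\alpha_g(g'\mathbb{Z},x)=(gg'\mathbb{Z},\ \alpha_{\delta(g,g'\mathbb{Z})}(x))$, and similarly for $\beta$. Continuous orbit equivalence of two actions $\gamma,\gamma'$ of a group $\Gamma$ on a space $Z$: a homeomorphism $\phi:Z\to Z$ with inverse $\psi$ and continuous $a,b:\Gamma\times Z\to\Gamma$ with $\phi(\gamma_g z)=\gamma'_{a(g,z)}\phi(z)$ and $\psi(\gamma'_h z)=\gamma_{b(h,z)}\psi(z)$. Conjugacy: a homeomorphism $\phi$ and an automorphism $\tau$ of $\Gamma$ with $\phi(\gamma_g z)=\gamma'_{\tau(g)}\phi(z)$ for all $g,z$. *)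

theory Defs
  imports "HOL-Analysis.Analysis"
begin

text \<open>An element (n, e) of type int * bool represents s^n t^e in
  D_inf = <s> semidirect <t>, with t s t^-1 = s^-1 and t^2 = 1.\<close>

type_synonym dinf = "int \<times> bool"

definition dmult :: "dinf \<Rightarrow> dinf \<Rightarrow> dinf" where
  "dmult g h = (fst g + (if snd g then - fst h else fst h), snd g \<noteq> snd h)"

definition dinv :: "dinf \<Rightarrow> dinf" where
  "dinv g = ((if snd g then fst g else - fst g), snd g)"

text \<open>The left coset g Z (Z = <s>) is determined by the t-exponent;
  G/Z is represented by bool (False = Z, True = tZ).\<close>

definition dcoset :: "dinf \<Rightarrow> bool" where
  "dcoset g = snd g"

definition dlift :: "bool \<Rightarrow> dinf" where
  "dlift c = (0, c)"

text \<open>The cocycle delta(g, g'Z) = L(g g'Z)^-1 g L(g'Z), an element of Z = <s>,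
  recorded by its exponent of s.\<close>

definition dcocycle :: "dinf \<Rightarrow> bool \<Rightarrow> int" where
  "dcocycle g c = fst (dmult (dinv (dlift (dcoset (dmult g (dlift c))))) (dmult g (dlift c)))"

definition induced_action :: "(int \<Rightarrow> 'a \<Rightarrow> 'a) \<Rightarrow> dinf \<Rightarrow> bool \<times> 'a \<Rightarrow> bool \<times> 'a" where
  "induced_action \<alpha> g y = (dcoset (dmult g (dlift (fst y))), \<alpha> (dcocycle g (fst y)) (snd y))"

definition Xtop :: "(bool \<times> 'a::topological_space) topology" where
  "Xtop = prod_topology (discrete_topology UNIV) euclidean"

definition int_action :: "(int \<Rightarrow> 'a::topological_space \<Rightarrow> 'a) \<Rightarrow> bool" where
  "int_action \<alpha> \<longleftrightarrow> \<alpha> 0 = id \<and> (\<forall>m n. \<alpha> (m + n) = \<alpha> m \<circ> \<alpha> n)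
     \<and> continuous_map (prod_topology (discrete_topology UNIV) euclidean) euclidean
         (\<lambda>(n, x). \<alpha> n x)"

definition minimal_action :: "(int \<Rightarrow> 'a::topological_space \<Rightarrow> 'a) \<Rightarrow> bool" where
  "minimal_action \<alpha> \<longleftrightarrow> (\<forall>x. closure (range (\<lambda>n. \<alpha> n x)) = UNIV)"

definition topologically_free :: "(int \<Rightarrow> 'a::topological_space \<Rightarrow> 'a) \<Rightarrow> bool" where
  "topologically_free \<alpha> \<longleftrightarrow> (\<forall>n. n \<noteq> 0 \<longrightarrow> interior {x. \<alpha> n x = x} = {})"

definition cont_orbit_equiv ::
  "'z topology \<Rightarrow> ('g \<Rightarrow> 'z \<Rightarrow> 'z) \<Rightarrow> ('g \<Rightarrow> 'z \<Rightarrow> 'z) \<Rightarrow> bool" where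
  "cont_orbit_equiv T \<gamma> \<gamma>' \<longleftrightarrow>
    (\<exists>\<phi> \<psi> a b. homeomorphic_maps T T \<phi> \<psi>
      \<and> continuous_map (prod_topology (discrete_topology UNIV) T) (discrete_topology UNIV) (\<lambda>(g, z). a g z)
      \<and> continuous_map (prod_topology (discrete_topology UNIV) T) (discrete_topology UNIV) (\<lambda>(h, z). b h z)
      \<and> (\<forall>g z. z \<in> topspace T \<longrightarrow> \<phi> (\<gamma> g z) = \<gamma>' (a g z) (\<phi> z))
      \<and> (\<forall>h z. z \<in> topspace T \<longrightarrow> \<psi> (\<gamma>' h z) = \<gamma> (b h z) (\<psi> z)))"

definition conjugate_actions ::
  "('g \<Rightarrow> 'g \<Rightarrow> 'g) \<Rightarrow> 'z topology \<Rightarrow> ('g \<Rightarrow> 'z \<Rightarrow> 'z) \<Rightarrow> ('g \<Rightarrow> 'z \<Rightarrow> 'z) \<Rightarrow> bool" where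
  "conjugate_actions gmult T \<gamma> \<gamma>' \<longleftrightarrow>
    (\<exists>\<phi> \<tau>. homeomorphic_map T T \<phi>
      \<and> bij \<tau> \<and> (\<forall>g h. \<tau> (gmult g h) = gmult (\<tau> g) (\<tau> h))
      \<and> (\<forall>g z. z \<in> topspace T \<longrightarrow> \<phi> (\<gamma> g z) = \<gamma>' (\<tau> g) (\<phi> z)))"

end

theory Submission
  imports Defs
begin

text \<open>
  Part (1) is read off on the trivial coset, where the induced actions are just \<alpha> and \<beta>.

  Part (2) is Boyle's flip conjugacy theorem for minimal topologically free actions of \<int>.
  If \<phi>(\<alpha>(n, x)) = \<beta>(a(n, x), \<phi> x), then n \<mapsto> a(n, x) is a bijection of \<int>
  (with inverse m \<mapsto> b(m, \<phi> x)) whose increments are bounded by a bound K of the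
  continuous function a(1, -) on the compact space. Such a bijection takes values of modulus
  greater than K outside [-K*K, K*K], with constant and opposite signs on the two rays. This
  orientation is \<alpha>-invariant, hence constant by minimality, and after replacing \<beta> by its
  flip n \<mapsto> \<beta>(-n) it is positive. Counting the negative values of a(-, x) on a window gives
  a continuous correction c with c(\<alpha>(1, x)) = c(x) + 1 - a(1, x), so that
  \<theta> x = \<beta>(c x, \<phi> x) is an equivariant continuous bijection, a homeomorphism by compactness.
  Finally, s^n t^e \<mapsto> s^(\<epsilon> n) t^e with \<epsilon> = \<plusminus>1 is an automorphism of the
  infinite dihedral group, and together with id \<times> \<theta> it conjugates the induced actions.
\<close>

lemma continuous_map_discrete_of_locally_constant:
  assumes "\<And>x. \<exists>U. open U \<and> x \<in> U \<and> (\<forall>y\<in>U. f y = f x)"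
  shows "continuous_map euclidean (discrete_topology UNIV) f"
proof -
  have "open (f -` W)" for W
  proof (rule Topological_Spaces.openI)
    fix x assume "x \<in> f -` W"
    moreover obtain U where "open U" "x \<in> U" "\<forall>y\<in>U. f y = f x" using assms by blast
    ultimately show "\<exists>T. open T \<and> x \<in> T \<and> T \<subseteq> f -` W" by (metis subsetI vimage_eq)
  qed
  then show ?thesis by (simp add: continuous_map_def vimage_def)
qed

lemma compact_continuous_map_discrete_int_bounded:
  fixes f :: "'a::topological_space \<Rightarrow> int"
  assumes "compact (UNIV :: 'a set)" "continuous_map euclidean (discrete_topology UNIV) f"
  shows "\<exists>K. \<forall>x. \<bar>f x\<bar> \<le> K"
proof -
  have "compactin (discrete_topology UNIV) (range f)"
    using image_compactin[OF _ assms(2), of UNIV] assms(1) by simp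
  then have "finite (range f)" by (simp add: compactin_discrete_topology)
  then have "\<forall>x. \<bar>f x\<bar> \<le> Max (abs ` range f)" by (intro allI Max_ge) auto
  then show ?thesis by blast
qed

lemma continuous_map_slice:
  assumes "continuous_map (prod_topology (discrete_topology UNIV) X) Y (\<lambda>(g, z). a g z)"
  shows "continuous_map X Y (a g)"
proof -
  have "continuous_map X (prod_topology (discrete_topology UNIV) X) (\<lambda>z. (g, z))"
    by (intro continuous_map_pairedI) auto
  from continuous_map_compose[OF this assms] show ?thesis by (simp add: o_def)
qed

lemma sign_constant_of_small_jumps:
  fixes f :: "int \<Rightarrow> int"
  assumes jump: "\<And>k. \<bar>f (k + 1) - f k\<bar> \<le> K"
    and large: "\<And>k. n \<le> k \<Longrightarrow> k \<le> m \<Longrightarrow> K < \<bar>f k\<bar>"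
    and "n \<le> m"
  shows "(0 < f m) = (0 < f n)"
proof -
  have "i \<le> m \<longrightarrow> (0 < f i) = (0 < f n)" if "n \<le> i" for i
    using that
  proof (induction i rule: int_ge_induct)
    case base
    then show ?case by simp
  next
    case (step i)
    show ?case
    proof
      assume "i + 1 \<le> m"
      then have "(0 < f i) = (0 < f n)" using step by simp
      moreover have "K < \<bar>f i\<bar>" "K < \<bar>f (i + 1)\<bar>" using large step \<open>i + 1 \<le> m\<close> by simp_all
      ultimately show "(0 < f (i + 1)) = (0 < f n)" using jump[of i] by arith
    qed
  qed
  then show ?thesis using \<open>n \<le> m\<close> by blast
qed

lemma card_less_shift:
  fixes f :: "'a \<Rightarrow> int"
  assumes "finite I" "inj_on f I" "lo \<le> hi"
    and onto: "\<And>v. lo \<le> v \<Longrightarrow> v < hi \<Longrightarrow> v \<in> f ` I"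
  shows "int (card {j \<in> I. f j < hi}) = int (card {j \<in> I. f j < lo}) + (hi - lo)"
proof -
  let ?between = "{j \<in> I. lo \<le> f j \<and> f j < hi}"
  have "f ` ?between = {lo..<hi}" using onto by fastforce
  moreover have "inj_on f ?between" using assms(2) by (rule inj_on_subset) auto
  ultimately have "card ?between = card {lo..<hi}" by (metis card_image)
  then have between: "int (card ?between) = hi - lo" using \<open>lo \<le> hi\<close> by simp
  have "{j \<in> I. f j < hi} = {j \<in> I. f j < lo} \<union> ?between" using \<open>lo \<le> hi\<close> by auto
  moreover have "card ({j \<in> I. f j < lo} \<union> ?between) = card {j \<in> I. f j < lo} + card ?between"
    using \<open>finite I\<close> by (intro card_Un_disjoint) auto
  ultimately show ?thesis using between by simp
qed

lemma card_window_shift: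
  fixes lo hi :: int
  assumes "P lo" "\<not> P (hi + 1)" "lo \<le> hi"
  shows "int (card {k \<in> {lo..hi}. P (k + 1)}) = int (card {k \<in> {lo..hi}. P k}) - 1"
proof -
  let ?S = "{k \<in> {lo..hi}. P k}"
  have "{k \<in> {lo..hi}. P (k + 1)} = (\<lambda>j. j - 1) ` (?S - {lo})"
  proof (intro set_eqI iffI)
    fix k assume k: "k \<in> {k \<in> {lo..hi}. P (k + 1)}"
    then have "k \<noteq> hi" using assms(2) by auto
    with k show "k \<in> (\<lambda>j. j - 1) ` (?S - {lo})" by (intro image_eqI[of _ _ "k + 1"]) auto
  qed auto
  then have "card {k \<in> {lo..hi}. P (k + 1)} = card (?S - {lo})"
    by (simp add: card_image inj_on_def)
  moreover have "lo \<in> ?S" using assms by simp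
  moreover have "finite ?S" by (rule finite_subset[of _ "{lo..hi}"]) auto
  ultimately have "0 < card ?S" "card {k \<in> {lo..hi}. P (k + 1)} = card ?S - 1"
    by (auto simp: card_Diff_singleton card_gt_0_iff)
  then show ?thesis by (simp add: of_nat_diff)
qed

lemma int_action_zero: "int_action \<alpha> \<Longrightarrow> \<alpha> 0 x = x"
  by (simp add: int_action_def)

lemma int_action_add: "int_action \<alpha> \<Longrightarrow> \<alpha> (m + n) x = \<alpha> m (\<alpha> n x)"
  by (simp add: int_action_def)

lemma int_action_continuous: "int_action \<alpha> \<Longrightarrow> continuous_map euclidean euclidean (\<alpha> n)"
  unfolding int_action_def by (blast intro: continuous_map_slice)

lemma minimal_action_closed_superset_orbit:
  assumes "minimal_action \<alpha>" "closed S" "range (\<lambda>n. \<alpha> n x) \<subseteq> S"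
  shows "S = UNIV"
  using closure_minimal[OF assms(3,2)] assms(1) unfolding minimal_action_def by auto

lemma minimal_topologically_free_imp_free:
  fixes \<alpha> :: "int \<Rightarrow> 'a::t2_space \<Rightarrow> 'a"
  assumes act: "int_action \<alpha>" and "minimal_action \<alpha>" "topologically_free \<alpha>" "\<alpha> n x = x"
  shows "n = 0"
proof (rule ccontr)
  assume "n \<noteq> 0"
  have "closed {y. \<alpha> n y = y}"
    using int_action_continuous[OF act] by (intro closed_Collect_eq) auto
  moreover have "\<alpha> n (\<alpha> k x) = \<alpha> k x" for k
    using int_action_add[OF act, of n k x] int_action_add[OF act, of k n x] assms(4)
    by (simp add: add.commute)
  then have "range (\<lambda>k. \<alpha> k x) \<subseteq> {y. \<alpha> n y = y}" by auto
  ultimately have "{y. \<alpha> n y = y} = UNIV"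
    using minimal_action_closed_superset_orbit[OF assms(2)] by blast
  then have "interior {y. \<alpha> n y = y} = UNIV" by simp
  with assms(3) \<open>n \<noteq> 0\<close> show False by (simp add: topologically_free_def)
qed

lemma free_action_inj:
  fixes \<alpha> :: "int \<Rightarrow> 'a \<Rightarrow> 'a"
  assumes "\<And>m n x. \<alpha> (m + n) x = \<alpha> m (\<alpha> n x)" "\<And>n x. \<alpha> n x = x \<Longrightarrow> n = 0"
    and "\<alpha> p y = \<alpha> q y"
  shows "p = q"
proof -
  have "\<alpha> (p - q) (\<alpha> q y) = \<alpha> q y" using assms(1)[of "p - q" q y] assms(3) by simp
  from assms(2)[OF this] show ?thesis by simp
qed

lemma equivariant_of_generator:
  fixes \<alpha> :: "int \<Rightarrow> 'a \<Rightarrow> 'a" and \<beta> :: "int \<Rightarrow> 'b \<Rightarrow> 'b"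
  assumes "\<And>m n x. \<alpha> (m + n) x = \<alpha> m (\<alpha> n x)" "\<And>x. \<alpha> 0 x = x"
    and "\<And>m n y. \<beta> (m + n) y = \<beta> m (\<beta> n y)" "\<And>y. \<beta> 0 y = y"
    and step: "\<And>x. h (\<alpha> 1 x) = \<beta> 1 (h x)"
  shows "h (\<alpha> n x) = \<beta> n (h x)"
proof (induction n arbitrary: x rule: int_induct[where k = 0])
  case base
  show ?case using assms by simp
next
  case (step1 i)
  have "h (\<alpha> (i + 1) x) = \<beta> 1 (h (\<alpha> i x))" using assms(1)[of 1 i] step by (simp add: add.commute)
  also have "\<dots> = \<beta> (i + 1) (h x)" using assms(3)[of 1 i] step1 by (simp add: add.commute)
  finally show ?case .
next
  case (step2 i)
  have "\<beta> 1 (h (\<alpha> (i - 1) x)) = \<beta> i (h x)"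
    using step[of "\<alpha> (i - 1) x"] assms(1)[of 1 "i - 1"] step2 by simp
  then have "\<beta> (-1) (\<beta> 1 (h (\<alpha> (i - 1) x))) = \<beta> (-1) (\<beta> i (h x))" by simp
  then show ?case using assms(3)[of "-1" 1] assms(3)[of "-1" i] assms(4) by simp
qed

lemma cocycle_linear_bound:
  fixes f :: "int \<Rightarrow> 'a \<Rightarrow> int"
  assumes cocycle: "\<And>m n x. f (m + n) x = f m (T n x) + f n x"
    and "\<And>x. T 0 x = x" and step: "\<And>x. \<bar>f 1 x\<bar> \<le> K"
  shows "\<bar>f n x\<bar> \<le> K * \<bar>n\<bar>"
proof (induction n arbitrary: x rule: int_induct[where k = 0])
  case base
  show ?case using cocycle[of 0 0 x] assms(2) by simp
next
  case (step1 i)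
  have "f (i + 1) x = f 1 (T i x) + f i x" using cocycle[of 1 i x] by (simp add: add.commute)
  then have "\<bar>f (i + 1) x\<bar> \<le> \<bar>f 1 (T i x)\<bar> + \<bar>f i x\<bar>" by (simp add: abs_triangle_ineq)
  then have "\<bar>f (i + 1) x\<bar> \<le> K + K * \<bar>i\<bar>" using step[of "T i x"] step1(2)[of x] by linarith
  then show ?case using step1(1) by (simp add: distrib_left)
next
  case (step2 i)
  have "f i x = f 1 (T (i - 1) x) + f (i - 1) x" using cocycle[of 1 "i - 1" x] by simp
  then have "\<bar>f (i - 1) x\<bar> \<le> \<bar>f 1 (T (i - 1) x)\<bar> + \<bar>f i x\<bar>" by (simp add: abs_triangle_ineq4)
  then have "\<bar>f (i - 1) x\<bar> \<le> K + K * \<bar>i\<bar>" using step[of "T (i - 1) x"] step2(2)[of x] by linarith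
  then show ?case using step2(1) by (simp add: right_diff_distrib)
qed

lemma int_action_flip:
  assumes act: "int_action \<beta>"
  shows "int_action (\<lambda>n. \<beta> (- n))"
proof -
  let ?P = "prod_topology (discrete_topology UNIV) euclidean :: (int \<times> 'a) topology"
  have "continuous_map ?P ?P (\<lambda>(n, x). (- n, id x))"
    by (simp add: continuous_map_prod_top)
  then have "continuous_map ?P euclidean ((\<lambda>(n, x). \<beta> n x) \<circ> (\<lambda>(n, x). (- n, id x)))"
    using act unfolding int_action_def by (blast intro: continuous_map_compose)
  then have "continuous_map ?P euclidean (\<lambda>(n, x). \<beta> (- n) x)"
    by (simp add: o_def case_prod_unfold)
  moreover have "\<beta> (- (m + n)) = \<beta> (- m) \<circ> \<beta> (- n)" for m n
    using act unfolding int_action_def by (metis minus_add_distrib)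
  ultimately show ?thesis using act by (simp add: int_action_def)
qed

lemma minimal_action_flip: "minimal_action \<beta> \<Longrightarrow> minimal_action (\<lambda>n. \<beta> (- n))"
proof -
  have "range (\<lambda>n. \<beta> (- n) y) = range (\<lambda>n. \<beta> n y)" for y
    unfolding image_image[of "\<lambda>n. \<beta> n y" uminus, symmetric] by simp
  then show "minimal_action \<beta> \<Longrightarrow> ?thesis" unfolding minimal_action_def by simp
qed

subsection \<open>Flip conjugacy of continuously orbit equivalent actions\<close>

locale orbit_equivalence =
  fixes \<alpha> \<beta> :: "int \<Rightarrow> 'a::t2_space \<Rightarrow> 'a" and \<phi> \<psi> :: "'a \<Rightarrow> 'a"
    and a b :: "int \<Rightarrow> 'a \<Rightarrow> int" and K :: int
  assumes compact_space: "compact (UNIV :: 'a set)"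
    and action_\<alpha>: "int_action \<alpha>" and action_\<beta>: "int_action \<beta>"
    and minimal_\<alpha>: "minimal_action \<alpha>" and minimal_\<beta>: "minimal_action \<beta>"
    and free_\<alpha>: "\<And>n x. \<alpha> n x = x \<Longrightarrow> n = 0"
    and free_\<beta>: "\<And>n y. \<beta> n y = y \<Longrightarrow> n = 0"
    and homeo: "homeomorphic_maps euclidean euclidean \<phi> \<psi>"
    and continuous_a:
      "continuous_map (prod_topology (discrete_topology UNIV) euclidean) (discrete_topology UNIV) (\<lambda>(n, x). a n x)"
    and \<phi>_orbit: "\<And>n x. \<phi> (\<alpha> n x) = \<beta> (a n x) (\<phi> x)"
    and \<psi>_orbit: "\<And>n y. \<psi> (\<beta> n y) = \<alpha> (b n y) (\<psi> y)"
    and a_one_bound: "\<And>x. \<bar>a 1 x\<bar> \<le> K" and b_one_bound: "\<And>y. \<bar>b 1 y\<bar> \<le> K"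
    and K_ge_1: "1 \<le> K"
begin

lemma \<alpha>_add: "\<alpha> (m + n) x = \<alpha> m (\<alpha> n x)"
  using action_\<alpha> by (rule int_action_add)

lemma \<alpha>_zero: "\<alpha> 0 x = x"
  using action_\<alpha> by (rule int_action_zero)

lemma \<beta>_add: "\<beta> (m + n) y = \<beta> m (\<beta> n y)"
  using action_\<beta> by (rule int_action_add)

lemma \<beta>_zero: "\<beta> 0 y = y"
  using action_\<beta> by (rule int_action_zero)

lemma \<psi>_\<phi>: "\<psi> (\<phi> x) = x" and \<phi>_\<psi>: "\<phi> (\<psi> y) = y"
  using homeo by (simp_all add: homeomorphic_maps_def)

lemma a_cocycle: "a (m + n) x = a m (\<alpha> n x) + a n x"
proof (rule free_action_inj[OF \<beta>_add free_\<beta>])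
  have "\<beta> (a (m + n) x) (\<phi> x) = \<phi> (\<alpha> m (\<alpha> n x))" by (simp add: \<phi>_orbit flip: \<alpha>_add)
  also have "\<dots> = \<beta> (a m (\<alpha> n x) + a n x) (\<phi> x)" by (simp add: \<phi>_orbit \<beta>_add)
  finally show "\<beta> (a (m + n) x) (\<phi> x) = \<beta> (a m (\<alpha> n x) + a n x) (\<phi> x)" .
qed

lemma b_cocycle: "b (m + n) y = b m (\<beta> n y) + b n y"
proof (rule free_action_inj[OF \<alpha>_add free_\<alpha>])
  have "\<alpha> (b (m + n) y) (\<psi> y) = \<psi> (\<beta> m (\<beta> n y))" by (simp add: \<psi>_orbit flip: \<beta>_add)
  also have "\<dots> = \<alpha> (b m (\<beta> n y) + b n y) (\<psi> y)" by (simp add: \<psi>_orbit \<alpha>_add)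
  finally show "\<alpha> (b (m + n) y) (\<psi> y) = \<alpha> (b m (\<beta> n y) + b n y) (\<psi> y)" .
qed

lemma a_b: "a (b m (\<phi> x)) x = m"
proof (rule free_action_inj[OF \<beta>_add free_\<beta>])
  have "\<beta> (a (b m (\<phi> x)) x) (\<phi> x) = \<phi> (\<alpha> (b m (\<phi> x)) (\<psi> (\<phi> x)))" by (simp add: \<phi>_orbit \<psi>_\<phi>)
  also have "\<dots> = \<beta> m (\<phi> x)" by (simp add: \<phi>_\<psi> flip: \<psi>_orbit)
  finally show "\<beta> (a (b m (\<phi> x)) x) (\<phi> x) = \<beta> m (\<phi> x)" .
qed

lemma b_a: "b (a n x) (\<phi> x) = n"
proof (rule free_action_inj[OF \<alpha>_add free_\<alpha>])
  have "\<alpha> (b (a n x) (\<phi> x)) x = \<psi> (\<beta> (a n x) (\<phi> x))" by (simp add: \<psi>_orbit \<psi>_\<phi>)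
  also have "\<dots> = \<alpha> n x" by (simp add: \<psi>_\<phi> flip: \<phi>_orbit)
  finally show "\<alpha> (b (a n x) (\<phi> x)) x = \<alpha> n x" .
qed

lemma a_linear_bound: "\<bar>a n x\<bar> \<le> K * \<bar>n\<bar>"
  using a_cocycle \<alpha>_zero a_one_bound by (rule cocycle_linear_bound)

lemma b_linear_bound: "\<bar>b n y\<bar> \<le> K * \<bar>n\<bar>"
  using b_cocycle \<beta>_zero b_one_bound by (rule cocycle_linear_bound)

lemma a_increment_bound: "\<bar>a (k + 1) x - a k x\<bar> \<le> K"
  using a_cocycle[of 1 k x] a_one_bound[of "\<alpha> k x"] by (simp add: add.commute)

lemma a_inj:
  assumes "a m x = a n x" shows "m = n"
proof -
  have "m = b (a n x) (\<phi> x)" using b_a[of m x] unfolding assms by (rule sym)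
  also have "\<dots> = n" by (rule b_a)
  finally show ?thesis .
qed

lemma a_far: "K * K < \<bar>n\<bar> \<Longrightarrow> K < \<bar>a n x\<bar>"
proof (rule ccontr)
  assume "K * K < \<bar>n\<bar>" "\<not> K < \<bar>a n x\<bar>"
  have "\<bar>n\<bar> \<le> K * \<bar>a n x\<bar>" using b_linear_bound[of "a n x" "\<phi> x"] by (simp add: b_a)
  also have "\<dots> \<le> K * K" using \<open>\<not> K < \<bar>a n x\<bar>\<close> K_ge_1 by (simp add: mult_left_mono)
  finally show False using \<open>K * K < \<bar>n\<bar>\<close> by simp
qed

lemma a_sign_constant_far:
  assumes "m \<le> n" "\<And>k. m \<le> k \<Longrightarrow> k \<le> n \<Longrightarrow> K * K < \<bar>k\<bar>"
  shows "(0 < a m x) = (0 < a n x)"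
proof -
  have "(0 < a n x) = (0 < a m x)"
    by (rule sign_constant_of_small_jumps[where f = "\<lambda>k. a k x"])
      (use assms a_increment_bound a_far in auto)
  then show ?thesis by simp
qed

lemma a_sign_positive_ray:
  assumes "K * K < m" "K * K < n" shows "(0 < a m x) = (0 < a n x)"
proof -
  have *: "(0 < a i x) = (0 < a j x)" if "K * K < i" "i \<le> j" for i j
    by (rule a_sign_constant_far) (use that abs_ge_self in \<open>fastforce+\<close>)
  show ?thesis using *[of m n] *[of n m] assms by fastforce
qed

lemma a_sign_negative_ray:
  assumes "m < - (K * K)" "n < - (K * K)" shows "(0 < a m x) = (0 < a n x)"
proof -
  have *: "(0 < a i x) = (0 < a j x)" if "j < - (K * K)" "i \<le> j" for i j
    by (rule a_sign_constant_far) (use that in \<open>auto simp: abs_if\<close>)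
  show ?thesis using *[of m n] *[of n m] assms by fastforce
qed

lemma a_sign_rays_opposite:
  assumes "K * K < m" "n < - (K * K)"
  shows "(0 < a m x) \<longleftrightarrow> \<not> (0 < a n x)"
proof -
  \<comment> \<open>The preimages of \<open>N\<close> and \<open>-N\<close> under \<open>a(-, x)\<close> are far out and have values
    of opposite signs, so they lie on different rays.\<close>
  define N where "N = K * (K * K) + 1"
  have "0 < N" using K_ge_1 by (simp add: N_def)
  have far: "K * K < \<bar>b v (\<phi> x)\<bar>" if "\<bar>v\<bar> = N" for v
  proof -
    have "K * (K * K) < K * \<bar>b v (\<phi> x)\<bar>"
      using a_linear_bound[of "b v (\<phi> x)" x] that by (simp add: a_b N_def)
    then show ?thesis using K_ge_1 by simp
  qed
  define p q where "p = b N (\<phi> x)" and "q = b (- N) (\<phi> x)"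
  have signs: "0 < a p x" "\<not> 0 < a q x" using \<open>0 < N\<close> by (simp_all add: p_def q_def a_b)
  have "K * K < \<bar>p\<bar>" "K * K < \<bar>q\<bar>" using far \<open>0 < N\<close> by (simp_all add: p_def q_def)
  then have "(K * K < p \<or> p < - (K * K)) \<and> (K * K < q \<or> q < - (K * K))" by arith
  then have "(K * K < p \<and> q < - (K * K)) \<or> (p < - (K * K) \<and> K * K < q)"
    using a_sign_positive_ray[of p q x] a_sign_negative_ray[of p q x] signs by blast
  then show ?thesis
    using a_sign_positive_ray[of m p x] a_sign_positive_ray[of m q x]
      a_sign_negative_ray[of n p x] a_sign_negative_ray[of n q x] assms signs
    by blast
qed

lemma orientation_step: "(0 < a (K * K + 1) (\<alpha> 1 x)) = (0 < a (K * K + 1) x)"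
proof -
  let ?M = "K * K + 1"
  have "0 \<le> K * K" using K_ge_1 by simp
  have "a (?M + 1) x = a ?M (\<alpha> 1 x) + a 1 x" by (rule a_cocycle)
  moreover have "K < \<bar>a ?M (\<alpha> 1 x)\<bar>" by (rule a_far) (use \<open>0 \<le> K * K\<close> in simp)
  moreover have "K < \<bar>a (?M + 1) x\<bar>" by (rule a_far) (use \<open>0 \<le> K * K\<close> in simp)
  moreover have "(0 < a (?M + 1) x) = (0 < a ?M x)" by (rule a_sign_positive_ray) simp_all
  ultimately show ?thesis using a_one_bound[of x] by arith
qed

lemma orientation_invariant: "(0 < a (K * K + 1) (\<alpha> n x)) = (0 < a (K * K + 1) x)"
  by (rule equivariant_of_generator[where \<beta> = "\<lambda>_ y. y" and h = "\<lambda>x. 0 < a (K * K + 1) x"])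
    (simp_all add: \<alpha>_add \<alpha>_zero orientation_step)

lemma orientation_cases: "(\<forall>x. 0 < a (K * K + 1) x) \<or> (\<forall>x. a (K * K + 1) x < 0)"
proof (cases "\<exists>x. 0 < a (K * K + 1) x")
  case True
  then obtain x where x: "0 < a (K * K + 1) x" by blast
  have "closed {y. 0 < a (K * K + 1) y}"
    using closedin_continuous_map_preimage[OF continuous_map_slice[OF continuous_a], of "{k. 0 < k}"]
    by simp
  moreover have "range (\<lambda>n. \<alpha> n x) \<subseteq> {y. 0 < a (K * K + 1) y}"
    using orientation_invariant x by auto
  ultimately have "{y. 0 < a (K * K + 1) y} = UNIV"
    by (rule minimal_action_closed_superset_orbit[OF minimal_\<alpha>])
  then show ?thesis by auto
next
  case False
  have "a (K * K + 1) x < 0" for x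
  proof -
    have "K < \<bar>a (K * K + 1) x\<bar>" by (rule a_far) (use K_ge_1 in simp)
    moreover have "\<not> 0 < a (K * K + 1) x" using False by blast
    ultimately show ?thesis using K_ge_1 by arith
  qed
  then show ?thesis by blast
qed

end

locale positive_orbit_equivalence = orbit_equivalence +
  assumes positive: "\<And>x. 0 < a (K * K + 1) x"
begin

lemma a_positive_ray:
  assumes "K * K < n" shows "K < a n x"
proof -
  have "0 < a n x" using a_sign_positive_ray[of n "K * K + 1" x] assms positive by simp
  moreover have "K < \<bar>a n x\<bar>" by (rule a_far) (use assms in arith)
  ultimately show ?thesis by simp
qed

lemma a_negative_ray:
  assumes "n < - (K * K)" shows "a n x < - K"
proof -
  have "\<not> 0 < a n x" using a_sign_rays_opposite[of "K * K + 1" n x] assms positive by simp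
  moreover have "K < \<bar>a n x\<bar>" by (rule a_far) (use assms in arith)
  ultimately show ?thesis by simp
qed

lemma a_window_covers:
  assumes "\<bar>v\<bar> \<le> K" shows "v \<in> (\<lambda>k. a k x) ` {- (K * K + 1)..K * K + 1}"
proof -
  have "\<bar>b v (\<phi> x)\<bar> \<le> K * \<bar>v\<bar>" by (rule b_linear_bound)
  also have "\<dots> \<le> K * K" using assms K_ge_1 by (simp add: mult_left_mono)
  finally have "b v (\<phi> x) \<in> {- (K * K + 1)..K * K + 1}" by auto
  then show ?thesis by (auto intro!: image_eqI[where x = "b v (\<phi> x)"] simp: a_b)
qed

definition correction :: "'a \<Rightarrow> int" where
  "correction x = - int (card {k \<in> {- (K * K + 1)..K * K + 1}. a k x < 0})"

lemma correction_step: "correction (\<alpha> 1 x) = correction x + 1 - a 1 x"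
proof -
  define W where "W = {- (K * K + 1)..K * K + 1}"
  let ?A = "a 1 x"
  have "a (k + 1) x = a k (\<alpha> 1 x) + ?A" for k by (rule a_cocycle)
  then have shift: "{k \<in> W. a k (\<alpha> 1 x) < 0} = {k \<in> W. a (k + 1) x < ?A}" by auto
  have A: "\<bar>?A\<bar> \<le> K" by (rule a_one_bound)
  have "int (card {k \<in> W. a (k + 1) x < ?A}) = int (card {k \<in> W. a k x < ?A}) - 1"
    unfolding W_def
  proof (rule card_window_shift)
    show "a (- (K * K + 1)) x < ?A" using a_negative_ray[of "- (K * K + 1)" x] A by simp
    show "\<not> a (K * K + 1 + 1) x < ?A" using a_positive_ray[of "K * K + 1 + 1" x] A by simp
    show "- (K * K + 1) \<le> K * K + 1" using zero_le_square[of K] by simp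
  qed
  moreover have "int (card {k \<in> W. a k x < ?A}) = int (card {k \<in> W. a k x < 0}) + ?A"
  proof -
    have "finite W" by (simp add: W_def)
    moreover have "inj_on (\<lambda>k. a k x) W" by (meson a_inj inj_onI)
    moreover have onto: "v \<in> (\<lambda>k. a k x) ` W" if "min 0 ?A \<le> v" "v < max 0 ?A" for v
      unfolding W_def by (rule a_window_covers) (use that A in arith)
    ultimately show ?thesis
      using card_less_shift[of W "\<lambda>k. a k x" 0 ?A] card_less_shift[of W "\<lambda>k. a k x" ?A 0]
      by (cases "0 \<le> ?A") simp_all
  qed
  ultimately show ?thesis unfolding correction_def W_def[symmetric] shift by simp
qed

lemma correction_continuous: "continuous_map euclidean (discrete_topology UNIV) correction"
proof (rule continuous_map_discrete_of_locally_constant)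
  fix x
  let ?W = "{- (K * K + 1)..K * K + 1}"
  let ?U = "\<Inter>k\<in>?W. {y. a k y = a k x}"
  have "open {y. a k y = a k x}" for k
    using openin_continuous_map_preimage[OF continuous_map_slice[OF continuous_a, where g = k], of "{a k x}"]
    by simp
  then have "open ?U" by (intro open_INT) auto
  moreover have "x \<in> ?U" by simp
  moreover have "correction y = correction x" if "y \<in> ?U" for y
  proof -
    have "{k \<in> ?W. a k y < 0} = {k \<in> ?W. a k x < 0}" using that by auto
    then show ?thesis by (simp add: correction_def)
  qed
  ultimately show "\<exists>U. open U \<and> x \<in> U \<and> (\<forall>y\<in>U. correction y = correction x)" by blast
qed

definition conjugacy :: "'a \<Rightarrow> 'a" where
  "conjugacy x = \<beta> (correction x) (\<phi> x)"

lemma conjugacy_step: "conjugacy (\<alpha> 1 x) = \<beta> 1 (conjugacy x)"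
proof -
  have "conjugacy (\<alpha> 1 x) = \<beta> (correction (\<alpha> 1 x) + a 1 x) (\<phi> x)"
    by (simp add: conjugacy_def \<phi>_orbit \<beta>_add)
  also have "\<dots> = \<beta> (1 + correction x) (\<phi> x)" by (simp add: correction_step add.commute)
  also have "\<dots> = \<beta> 1 (conjugacy x)" by (simp add: conjugacy_def \<beta>_add)
  finally show ?thesis .
qed

lemma conjugacy_equivariant: "conjugacy (\<alpha> n x) = \<beta> n (conjugacy x)"
  by (rule equivariant_of_generator[where h = conjugacy, OF \<alpha>_add \<alpha>_zero \<beta>_add \<beta>_zero conjugacy_step])

lemma conjugacy_continuous: "continuous_map euclidean euclidean conjugacy"
proof -
  have "continuous_map euclidean (prod_topology (discrete_topology UNIV) euclidean)
      (\<lambda>x. (correction x, \<phi> x))"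
    using homeo by (intro continuous_map_pairedI correction_continuous) (simp add: homeomorphic_maps_def)
  moreover have "continuous_map (prod_topology (discrete_topology UNIV) euclidean) euclidean (\<lambda>(n, y). \<beta> n y)"
    using action_\<beta> unfolding int_action_def by blast
  ultimately have "continuous_map euclidean euclidean ((\<lambda>(n, y). \<beta> n y) \<circ> (\<lambda>x. (correction x, \<phi> x)))"
    by (rule continuous_map_compose)
  moreover have "(\<lambda>(n, y). \<beta> n y) \<circ> (\<lambda>x. (correction x, \<phi> x)) = conjugacy"
    by (simp add: fun_eq_iff conjugacy_def)
  ultimately show ?thesis by simp
qed

lemma inj_conjugacy: "inj conjugacy"
proof (rule injI)
  fix x y assume eq: "conjugacy x = conjugacy y"
  let ?d = "correction x - correction y"
  define m where "m = b ?d (\<phi> x)"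
  have "\<phi> y = \<beta> (- correction y) (conjugacy y)"
    using \<beta>_add[of "- correction y" "correction y" "\<phi> y"] by (simp add: conjugacy_def \<beta>_zero)
  also have "\<dots> = \<beta> ?d (\<phi> x)"
    using \<beta>_add[of "- correction y" "correction x" "\<phi> x"] eq by (simp add: conjugacy_def)
  finally have "\<psi> (\<phi> y) = \<psi> (\<beta> ?d (\<phi> x))" by simp
  then have y: "y = \<alpha> m x" by (simp add: m_def \<psi>_orbit \<psi>_\<phi>)
  have "\<beta> m (conjugacy x) = conjugacy y"
    unfolding y by (rule conjugacy_equivariant [symmetric])
  then have "m = 0" using eq by (intro free_\<beta>) simp
  with y show "x = y" by (simp add: \<alpha>_zero)
qed

lemma surj_conjugacy: "surj conjugacy"
proof -
  have "compact (range conjugacy)"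
    using compact_space conjugacy_continuous by (intro compact_continuous_image) simp_all
  then have "closed (range conjugacy)" by (rule compact_imp_closed)
  moreover have "range (\<lambda>n. \<beta> n (conjugacy x)) \<subseteq> range conjugacy" for x
    by (auto simp flip: conjugacy_equivariant)
  ultimately show ?thesis by (rule minimal_action_closed_superset_orbit[OF minimal_\<beta>])
qed

lemma homeomorphic_map_conjugacy: "homeomorphic_map euclidean euclidean conjugacy"
proof -
  obtain g where "homeomorphism UNIV UNIV conjugacy g"
    using homeomorphism_compact[OF compact_space _ surj_conjugacy] inj_conjugacy conjugacy_continuous
    by auto
  then have "homeomorphic_maps euclidean euclidean conjugacy g"
    by (simp add: homeomorphism_def homeomorphic_maps_def)
  then show ?thesis by (auto simp: homeomorphic_map_maps)
qed

end
context orbit_equivalence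
begin

lemma flip_conjugate:
  "\<exists>\<theta> \<epsilon>. homeomorphic_map euclidean euclidean \<theta> \<and> (\<epsilon> = 1 \<or> \<epsilon> = -1)
     \<and> (\<forall>n x. \<theta> (\<alpha> n x) = \<beta> (\<epsilon> * n) (\<theta> x))"
proof (cases "\<forall>x. 0 < a (K * K + 1) x")
  case True
  then have P: "positive_orbit_equivalence \<alpha> \<beta> \<phi> \<psi> a b K"
    by (intro positive_orbit_equivalence.intro orbit_equivalence_axioms positive_orbit_equivalence_axioms.intro) simp
  show ?thesis
    using positive_orbit_equivalence.homeomorphic_map_conjugacy[OF P]
      positive_orbit_equivalence.conjugacy_equivariant[OF P]
    by (intro exI[of _ "positive_orbit_equivalence.conjugacy \<beta> \<phi> a K"] exI[of _ 1]) simp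
next
  case False
  then have negative: "a (K * K + 1) x < 0" for x using orientation_cases by blast
  have "continuous_map (prod_topology (discrete_topology UNIV) euclidean) (discrete_topology UNIV)
      (uminus \<circ> (\<lambda>(n, x). a n x))"
    using continuous_a by (rule continuous_map_compose) simp
  then have continuous_neg_a:
    "continuous_map (prod_topology (discrete_topology UNIV) euclidean) (discrete_topology UNIV) (\<lambda>(n, x). - a n x)"
    by (simp add: o_def case_prod_unfold)
  have P: "positive_orbit_equivalence \<alpha> (\<lambda>n. \<beta> (- n)) \<phi> \<psi> (\<lambda>n x. - a n x) (\<lambda>n y. b (- n) y) K"
  proof unfold_locales
    show "\<And>n y. \<beta> (- n) y = y \<Longrightarrow> n = 0" using free_\<beta> by fastforce
    show "\<And>y. \<bar>b (- 1) y\<bar> \<le> K" using b_linear_bound[of "- 1"] by simp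
    show "\<And>x. 0 < - a (K * K + 1) x" using negative by simp
  qed (simp_all add: compact_space action_\<alpha> int_action_flip[OF action_\<beta>] minimal_\<alpha>
      minimal_action_flip[OF minimal_\<beta>] free_\<alpha> homeo continuous_neg_a \<phi>_orbit \<psi>_orbit
      a_one_bound K_ge_1)
  show ?thesis
    using positive_orbit_equivalence.homeomorphic_map_conjugacy[OF P]
      positive_orbit_equivalence.conjugacy_equivariant[OF P]
    by (intro exI[of _ "positive_orbit_equivalence.conjugacy (\<lambda>n. \<beta> (- n)) \<phi> (\<lambda>n x. - a n x) K"]
        exI[of _ "- 1"]) simp
qed

end

theorem cont_orbit_equiv_imp_flip_conjugate:
  fixes \<alpha> \<beta> :: "int \<Rightarrow> 'a::t2_space \<Rightarrow> 'a"
  assumes "compact (UNIV :: 'a set)" "int_action \<alpha>" "int_action \<beta>"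
    and "minimal_action \<alpha>" "minimal_action \<beta>" "topologically_free \<alpha>" "topologically_free \<beta>"
    and "cont_orbit_equiv euclidean \<alpha> \<beta>"
  shows "\<exists>\<theta> \<epsilon>. homeomorphic_map euclidean euclidean \<theta> \<and> (\<epsilon> = 1 \<or> \<epsilon> = -1)
     \<and> (\<forall>n x. \<theta> (\<alpha> n x) = \<beta> (\<epsilon> * n) (\<theta> x))"
proof -
  obtain \<phi> \<psi> a b where homeo: "homeomorphic_maps euclidean euclidean \<phi> \<psi>"
    and ca: "continuous_map (prod_topology (discrete_topology UNIV) euclidean) (discrete_topology UNIV) (\<lambda>(n, x). a n x)"
    and cb: "continuous_map (prod_topology (discrete_topology UNIV) euclidean) (discrete_topology UNIV) (\<lambda>(n, y). b n y)"
    and orbits: "\<And>n x. \<phi> (\<alpha> n x) = \<beta> (a n x) (\<phi> x)" "\<And>n y. \<psi> (\<beta> n y) = \<alpha> (b n y) (\<psi> y)"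
    using assms(8) unfolding cont_orbit_equiv_def by auto
  obtain Ka Kb where Ka: "\<And>x. \<bar>a 1 x\<bar> \<le> Ka" and Kb: "\<And>y. \<bar>b 1 y\<bar> \<le> Kb"
    using compact_continuous_map_discrete_int_bounded[OF assms(1) continuous_map_slice[OF ca]]
      compact_continuous_map_discrete_int_bounded[OF assms(1) continuous_map_slice[OF cb]]
    by blast
  have "orbit_equivalence \<alpha> \<beta> \<phi> \<psi> a b (max 1 (max Ka Kb))"
  proof unfold_locales
    show "\<And>n x. \<alpha> n x = x \<Longrightarrow> n = 0"
      using minimal_topologically_free_imp_free assms(2,4,6) by blast
    show "\<And>n y. \<beta> n y = y \<Longrightarrow> n = 0"
      using minimal_topologically_free_imp_free assms(3,5,7) by blast
    show "\<bar>a 1 x\<bar> \<le> max 1 (max Ka Kb)" for x using Ka[of x] by linarith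
    show "\<bar>b 1 y\<bar> \<le> max 1 (max Ka Kb)" for y using Kb[of y] by linarith
  qed (simp_all add: assms(1-5) homeo ca orbits)
  then show ?thesis by (rule orbit_equivalence.flip_conjugate)
qed

subsection \<open>Induced actions of the infinite dihedral group\<close>

lemma induced_action_Pair:
  "induced_action \<gamma> (n, e) (c, x) = (e \<noteq> c, \<gamma> (if e \<noteq> c then - n else n) x)"
  by (simp add: induced_action_def dcocycle_def dcoset_def dmult_def dlift_def dinv_def)

lemma induced_action_trivial_coset:
  "induced_action \<alpha> (n, False) (False, x) = induced_action \<beta> h (False, x) \<Longrightarrow> \<alpha> n x = \<beta> (fst h) x"
  by (cases h) (simp add: induced_action_Pair split: if_splits)

lemma continuous_map_restrict_trivial_coset:
  fixes c :: "dinf \<Rightarrow> bool \<times> 'a::topological_space \<Rightarrow> dinf"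
  assumes "continuous_map (prod_topology (discrete_topology UNIV) Xtop) (discrete_topology UNIV) (\<lambda>(g, y). c g y)"
  shows "continuous_map (prod_topology (discrete_topology UNIV) euclidean) (discrete_topology UNIV)
           (\<lambda>(n, x). fst (c (n, False) (False, x)))"
proof -
  let ?P = "prod_topology (discrete_topology UNIV) euclidean :: (int \<times> 'a) topology"
  have "continuous_map ?P (discrete_topology UNIV) (\<lambda>p. (fst p, False))"
    by (rule continuous_map_compose[OF continuous_map_fst, where g = "\<lambda>n. (n, False)", unfolded o_def])
      simp
  moreover have "continuous_map ?P Xtop (\<lambda>p. (False, snd p))"
    unfolding Xtop_def by (intro continuous_map_pairedI continuous_map_snd) simp
  ultimately have "continuous_map ?P (prod_topology (discrete_topology UNIV) Xtop)
      (\<lambda>p. ((fst p, False), (False, snd p)))"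
    by (rule continuous_map_pairedI)
  from continuous_map_compose[OF continuous_map_compose[OF this assms], of _ fst]
  show ?thesis by (simp add: o_def case_prod_unfold)
qed

lemma induced_orbit_equiv_by_id_imp_orbit_equiv:
  fixes \<alpha> \<beta> :: "int \<Rightarrow> 'a::topological_space \<Rightarrow> 'a"
  assumes "continuous_map (prod_topology (discrete_topology UNIV) Xtop) (discrete_topology UNIV) (\<lambda>(g, y). c g y)"
    and "continuous_map (prod_topology (discrete_topology UNIV) Xtop) (discrete_topology UNIV) (\<lambda>(g, y). c' g y)"
    and "\<And>g y. induced_action \<alpha> g y = induced_action \<beta> (c g y) y"
    and "\<And>g y. induced_action \<beta> g y = induced_action \<alpha> (c' g y) y"
  shows "cont_orbit_equiv euclidean \<alpha> \<beta>"
proof -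
  let ?a = "\<lambda>n x. fst (c (n, False) (False, x))" and ?b = "\<lambda>n x. fst (c' (n, False) (False, x))"
  have "\<alpha> n x = \<beta> (?a n x) x" "\<beta> n x = \<alpha> (?b n x) x" for n x
    using induced_action_trivial_coset[OF assms(3)] induced_action_trivial_coset[OF assms(4)] .
  then show ?thesis
    unfolding cont_orbit_equiv_def
    by (intro exI[of _ id] exI[of _ ?a] exI[of _ ?b] conjI continuous_map_restrict_trivial_coset assms(1,2))
      (simp_all add: homeomorphic_maps_id)
qed

lemma flip_conjugate_imp_induced_conjugate:
  fixes \<alpha> \<beta> :: "int \<Rightarrow> 'a::topological_space \<Rightarrow> 'a"
  assumes "homeomorphic_map euclidean euclidean \<theta>" "\<epsilon> = 1 \<or> \<epsilon> = -1"
    and "\<And>n x. \<theta> (\<alpha> n x) = \<beta> (\<epsilon> * n) (\<theta> x)"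
  shows "conjugate_actions dmult Xtop (induced_action \<alpha>) (induced_action \<beta>)"
proof -
  obtain \<theta>' where "homeomorphic_maps euclidean euclidean \<theta> \<theta>'"
    using assms(1) homeomorphic_map_maps by blast
  moreover have "homeomorphic_maps (discrete_topology UNIV) (discrete_topology UNIV) id id"
    by (simp add: homeomorphic_maps_id)
  ultimately have "homeomorphic_maps Xtop Xtop (\<lambda>(c, x). (id c, \<theta> x)) (\<lambda>(c, x). (id c, \<theta>' x))"
    unfolding Xtop_def homeomorphic_maps_prod by blast
  then have "homeomorphic_map Xtop Xtop (\<lambda>(c, x). (c, \<theta> x))"
    by (auto simp: homeomorphic_map_maps)
  moreover
  define \<tau> where "\<tau> = (\<lambda>(n, e). (\<epsilon> * n, e :: bool))"
  have "\<tau> \<circ> \<tau> = id"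
    using assms(2) by (auto simp: \<tau>_def fun_eq_iff)
  then have "bij \<tau>" using o_bij by blast
  moreover have "\<tau> (dmult g h) = dmult (\<tau> g) (\<tau> h)" for g h
    by (cases g; cases h) (simp add: \<tau>_def dmult_def algebra_simps)
  moreover have "(\<lambda>(c, x). (c, \<theta> x)) (induced_action \<alpha> g z)
      = induced_action \<beta> (\<tau> g) ((\<lambda>(c, x). (c, \<theta> x)) z)" for g z
    by (cases g; cases z) (simp add: \<tau>_def induced_action_Pair assms(3))
  ultimately show ?thesis
    unfolding conjugate_actions_def by blast
qed

theorem mainTheorem12:
  fixes \<alpha> \<beta> :: "int \<Rightarrow> 'a::t2_space \<Rightarrow> 'a"
  assumes "compact (UNIV :: 'a set)"
    and "int_action \<alpha>" and "int_action \<beta>"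
    and "minimal_action \<alpha>" and "minimal_action \<beta>"
    and "topologically_free \<alpha>" and "topologically_free \<beta>"
  shows "((\<exists>c c'.
            continuous_map (prod_topology (discrete_topology UNIV) Xtop) (discrete_topology UNIV) (\<lambda>(g, y). c g y)
          \<and> continuous_map (prod_topology (discrete_topology UNIV) Xtop) (discrete_topology UNIV) (\<lambda>(g, y). c' g y)
          \<and> (\<forall>g y. induced_action \<alpha> g y = induced_action \<beta> (c g y) y)
          \<and> (\<forall>g y. induced_action \<beta> g y = induced_action \<alpha> (c' g y) y))
         \<longrightarrow> cont_orbit_equiv euclidean \<alpha> \<beta>)
       \<and> (cont_orbit_equiv euclidean \<alpha> \<beta>
         \<longrightarrow> conjugate_actions dmult Xtop (induced_action \<alpha>) (induced_action \<beta>))"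
proof (intro conjI impI)
  assume "\<exists>c c'.
            continuous_map (prod_topology (discrete_topology UNIV) Xtop) (discrete_topology UNIV) (\<lambda>(g, y). c g y)
          \<and> continuous_map (prod_topology (discrete_topology UNIV) Xtop) (discrete_topology UNIV) (\<lambda>(g, y). c' g y)
          \<and> (\<forall>g y. induced_action \<alpha> g y = induced_action \<beta> (c g y) y)
          \<and> (\<forall>g y. induced_action \<beta> g y = induced_action \<alpha> (c' g y) y)"
  then show "cont_orbit_equiv euclidean \<alpha> \<beta>"
    by (elim exE conjE) (rule induced_orbit_equiv_by_id_imp_orbit_equiv; blast)
next
  assume "cont_orbit_equiv euclidean \<alpha> \<beta>"
  then obtain \<theta> \<epsilon> where "homeomorphic_map euclidean euclidean \<theta>" "\<epsilon> = 1 \<or> \<epsilon> = -1"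
    "\<forall>n x. \<theta> (\<alpha> n x) = \<beta> (\<epsilon> * n) (\<theta> x)"
    using cont_orbit_equiv_imp_flip_conjugate[OF assms] by blast
  then show "conjugate_actions dmult Xtop (induced_action \<alpha>) (induced_action \<beta>)"
    by (intro flip_conjugate_imp_induced_conjugate) blast+
qed

end
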